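(* Consider minimizing $f(x)$ subject to $g(x)\in\Theta$, where $\Theta\subset\mathbb{R}^m$ is a nonempty convex polyhedron, $f$ is $\mathcal C^{1,1}$ and $g$ is $\mathcal C^2$ around a feasible $\bar x$, and suppose SOCQ holds at $\bar x$, i.e. there is $\bar y\in N_\Theta(g(\bar x))$ with $\nabla f(\bar x)+\nabla g(\bar x)^*\bar y=0$ and $D^*N_\Theta(g(\bar x),\bar y)(0)\cap\ker\nabla g(\bar x)^*=\{0\}$. Then: (i) if $\bar x$ is a local minimizer, the multiplier $\bar y\in N_\Theta(g(\bar x))$ with $\nabla f(\bar x)+\nabla g(\bar x)^*\bar y=0$ is unique and $\langle z,w\rangle+\langle w,\nabla^2\langle\bar y,g\rangle(\bar x)w\rangle\ge0$ for all $w\in-K_\Gamma(\bar x,-\nabla f(\bar x))$, $z\in\breve\partial^2f(\bar x)(w)$; (ii) if $\bar x$ is a strong local minimizer with modulus $\sigma>0$, then $\bar y$ is unique and $\langle z,w\rangle+\langle w,\nabla^2\langle\bar y,g\rangle(\bar x)w\rangle\ge\sigma\|w\|^2$ for all such $w,z$.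
   Context: $\Gamma:=\{x:g(x)\in\Theta\}$. $D^*N_\Theta(u,y)(w):=\{v:(v,-w)\in N_{\operatorname{gph}N_\Theta}(u,y)\}$ is the limiting coderivative of the normal cone mapping, with $N$ the limiting normal cone (all limits of regular normals $\widehat N_\Omega(z_k)$, $z_k\to\bar z$ in $\Omega$, where $\widehat N_\Omega(\bar z):=\{v:\limsup_{z\to\bar z,z\in\Omega}\langle v,z-\bar z\rangle/\|z-\bar z\|\le0\}$). Tangent cone $T_\Omega(\bar x):=\{w:\exists t_k\downarrow0,w_k\to w,\bar x+t_kw_k\in\Omega\}$; critical cone $K_\Omega(\bar x,\bar v):=T_\Omega(\bar x)\cap\{\bar v\}^\perp$. $\breve\partial^2f(\bar x)(w):=\{z:(z,-w)\in\widehat N_{\operatorname{gph}\nabla f}(\bar x,\nabla f(\bar x))\}$. Strong local minimizer with modulus $\sigma$: $f(x)\ge f(\bar x)+\frac\sigma2\|x-\bar x\|^2$ for feasible $x$ near $\bar x$. *)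

theory Defs
  imports "HOL-Analysis.Analysis"
begin

text \<open>Regular (Frechet) normal cone: v such that limsup of inner v (z - zb) / norm (z - zb)
  over z in Omega tending to zb is at most 0 (written out with epsilon/delta).
  Empty if zb is not in Omega.\<close>
definition regular_normal :: "'a::real_inner set \<Rightarrow> 'a \<Rightarrow> 'a set" where
  "regular_normal \<Omega> zb = {v. zb \<in> \<Omega> \<and>
     (\<forall>e>0. \<exists>d>0. \<forall>z\<in>\<Omega>. norm (z - zb) < d \<longrightarrow> inner v (z - zb) \<le> e * norm (z - zb))}"

definition limiting_normal :: "'a::real_inner set \<Rightarrow> 'a \<Rightarrow> 'a set" where
  "limiting_normal \<Omega> zb = {v. zb \<in> \<Omega> \<and>
     (\<exists>zs vs. (\<forall>k. zs k \<in> \<Omega> \<and> vs k \<in> regular_normal \<Omega> (zs k)) \<and>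
              zs \<longlonglongrightarrow> zb \<and> vs \<longlonglongrightarrow> v)}"

definition normal_graph :: "'a::real_inner set \<Rightarrow> ('a \<times> 'a) set" where
  "normal_graph \<Theta> = {(u, y). y \<in> limiting_normal \<Theta> u}"

definition coderiv_normal :: "'a::real_inner set \<Rightarrow> 'a \<Rightarrow> 'a \<Rightarrow> 'a \<Rightarrow> 'a set" where
  "coderiv_normal \<Theta> u y w = {v. (v, - w) \<in> limiting_normal (normal_graph \<Theta>) (u, y)}"

definition tangent_cone :: "'a::real_normed_vector set \<Rightarrow> 'a \<Rightarrow> 'a set" where
  "tangent_cone \<Omega> xb = {w. \<exists>t ws. (\<forall>k. t k > 0 \<and> xb + t k *\<^sub>R ws k \<in> \<Omega>) \<and>
       t \<longlonglongrightarrow> 0 \<and> ws \<longlonglongrightarrow> w}"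

definition critical_cone :: "'a::real_inner set \<Rightarrow> 'a \<Rightarrow> 'a \<Rightarrow> 'a set" where
  "critical_cone \<Omega> xb vb = tangent_cone \<Omega> xb \<inter> {w. inner vb w = 0}"

text \<open>Regular second-order subdifferential breve-partial^2 f(xb)(w), where the gradient
  mapping nabla f is given by df on its domain D (a neighbourhood of xb).\<close>
definition breve_subdiff2 :: "'a set \<Rightarrow> ('a \<Rightarrow> 'a::real_inner) \<Rightarrow> 'a \<Rightarrow> 'a \<Rightarrow> 'a set" where
  "breve_subdiff2 D df xb w =
     {z. (z, - w) \<in> regular_normal {(x, df x) | x. x \<in> D} (xb, df xb)}"

end

theory Submission
  imports Defs
begin

text \<open>
  For a convex set the limiting normal cone is the normal cone of convex analysis, and the normal
  cone mapping is monotone. Hence the difference of two multipliers lies in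
  D*N(g xb, yb)(0) \<inter> ker \<nabla>g(xb)*, which SOCQ forces to be trivial; the same inclusion shows that
  the span of the normal cone meets ker \<nabla>g(xb)* only in 0, i.e. \<nabla>g(xb) is onto modulo the
  orthogonal complement of the normal cone.

  This surjectivity, via Brouwer's fixed point theorem, turns a critical direction d into
  points xb + t d + o(t) whose images are g xb + t \<nabla>g(xb) d plus a vector orthogonal to the normal
  cone. Because \<Theta> is a polyhedron these points are feasible, and yb \<bullet> g is constant along
  them. So the growth of f becomes growth of the Lagrangian, and comparing it with the upper
  second-order expansion of the Lagrangian supplied by a regular normal (z, -w) to the graph of
  \<nabla>f yields the second-order inequality.
\<close>

section \<open>Normal cones of convex sets\<close>

lemma regular_normal_convex_inner_le:
  fixes S :: "'a::real_inner set"
  assumes "convex S" and v: "v \<in> regular_normal S zb" and z: "z \<in> S"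
  shows "v \<bullet> (z - zb) \<le> 0"
proof (rule ccontr)
  assume "\<not> ?thesis"
  then have pos: "v \<bullet> (z - zb) > 0" by simp
  have zb: "zb \<in> S" using v by (simp add: regular_normal_def)
  have n: "norm (z - zb) > 0" using pos by auto
  define e where "e = (v \<bullet> (z - zb)) / (2 * norm (z - zb))"
  have "e > 0" using pos n by (simp add: e_def)
  then obtain d where d: "d > 0" "\<forall>y\<in>S. norm (y - zb) < d \<longrightarrow> v \<bullet> (y - zb) \<le> e * norm (y - zb)"
    using v by (auto simp: regular_normal_def)
  define t where "t = min 1 (d / (2 * norm (z - zb)))"
  have t: "t > 0" "t \<le> 1" using d n by (auto simp: t_def)
  define p where "p = zb + t *\<^sub>R (z - zb)"
  have "p = (1 - t) *\<^sub>R zb + t *\<^sub>R z" by (simp add: p_def algebra_simps)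
  then have "p \<in> S" using \<open>convex S\<close> zb z t by (simp add: convex_def)
  moreover have "norm (p - zb) = t * norm (z - zb)" using t by (simp add: p_def)
  moreover have "t * norm (z - zb) \<le> d / 2"
    using n mult_right_mono[of t "d / (2 * norm (z - zb))" "norm (z - zb)"] by (simp add: t_def)
  ultimately have "v \<bullet> (p - zb) \<le> e * (t * norm (z - zb))" using d by auto
  then have "t * (v \<bullet> (z - zb)) \<le> e * (t * norm (z - zb))" by (simp add: p_def)
  then have "v \<bullet> (z - zb) \<le> e * norm (z - zb)" using t by (simp add: mult.left_commute)
  also have "\<dots> = v \<bullet> (z - zb) / 2" using n by (simp add: e_def)
  finally show False using pos by simp
qed

lemma limiting_normal_convex_iff:
  fixes S :: "'a::real_inner set"
  assumes "convex S"
  shows "v \<in> limiting_normal S zb \<longleftrightarrow> zb \<in> S \<and> (\<forall>z\<in>S. v \<bullet> (z - zb) \<le> 0)"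
proof
  assume v: "v \<in> limiting_normal S zb"
  then obtain zs vs where h: "\<forall>k. zs k \<in> S \<and> vs k \<in> regular_normal S (zs k)"
    "zs \<longlonglongrightarrow> zb" "vs \<longlonglongrightarrow> v"
    by (auto simp: limiting_normal_def)
  have "v \<bullet> (z - zb) \<le> 0" if "z \<in> S" for z
  proof (rule LIMSEQ_le_const2)
    show "(\<lambda>k. vs k \<bullet> (z - zs k)) \<longlonglongrightarrow> v \<bullet> (z - zb)" by (intro tendsto_intros h)
    show "\<exists>N. \<forall>k\<ge>N. vs k \<bullet> (z - zs k) \<le> 0"
      using regular_normal_convex_inner_le[OF assms] h that by blast
  qed
  with v show "zb \<in> S \<and> (\<forall>z\<in>S. v \<bullet> (z - zb) \<le> 0)" by (simp add: limiting_normal_def)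
next
  assume h: "zb \<in> S \<and> (\<forall>z\<in>S. v \<bullet> (z - zb) \<le> 0)"
  then have "v \<in> regular_normal S zb"
    by (auto simp: regular_normal_def intro!: exI[of _ 1] order_trans[OF _ mult_nonneg_nonneg])
  with h show "v \<in> limiting_normal S zb"
    unfolding limiting_normal_def by (intro CollectI conjI exI[of _ "\<lambda>_. zb"] exI[of _ "\<lambda>_. v"]) auto
qed

lemma limiting_normal_convex_add_scaled:
  fixes S :: "'a::real_inner set"
  assumes "convex S" and "a \<in> limiting_normal S u" "b \<in> limiting_normal S u" "c \<ge> 0"
  shows "a + c *\<^sub>R b \<in> limiting_normal S u"
  using assms limiting_normal_convex_iff[OF \<open>convex S\<close>]
  by (auto simp: inner_add_left intro!: add_nonpos_nonpos mult_nonneg_nonpos)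

lemma span_limiting_normal_convex:
  fixes S :: "'a::real_inner set"
  assumes "convex S" and "u \<in> S" and "y \<in> span (limiting_normal S u)"
  shows "\<exists>y1\<in>limiting_normal S u. \<exists>y2\<in>limiting_normal S u. y = y1 - y2"
  using \<open>y \<in> span _\<close>
proof (induct rule: span_induct_alt)
  case base
  have "0 \<in> limiting_normal S u" using \<open>u \<in> S\<close> limiting_normal_convex_iff[OF \<open>convex S\<close>] by simp
  then show ?case by force
next
  case (step c x y)
  then obtain y1 y2 where y: "y1 \<in> limiting_normal S u" "y2 \<in> limiting_normal S u" "y = y1 - y2"
    by blast
  show ?case
  proof (cases "c \<ge> 0")
    case True
    then have "y1 + c *\<^sub>R x \<in> limiting_normal S u"
      using limiting_normal_convex_add_scaled[OF \<open>convex S\<close>] y step by blast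
    then show ?thesis using y by (intro bexI[of _ "y1 + c *\<^sub>R x"] bexI[of _ y2]) auto
  next
    case False
    then have "y2 + (- c) *\<^sub>R x \<in> limiting_normal S u"
      using limiting_normal_convex_add_scaled[OF \<open>convex S\<close>, of y2 u x "- c"] y step by simp
    then show ?thesis using y by (intro bexI[of _ y1] bexI[of _ "y2 + (- c) *\<^sub>R x"]) auto
  qed
qed

text \<open>By monotonicity of the normal cone mapping, the graph deviates from the half-space through
  (u, y) with outer normal (y1 - y, 0) only by a term quadratic in the distance to (u, y).\<close>

lemma regular_normal_normal_graph_convex:
  fixes S :: "'a::real_inner set"
  assumes "convex S" and y1: "y1 \<in> limiting_normal S u" and y: "y \<in> limiting_normal S u"
    and "c > 0"
  shows "(c *\<^sub>R (y1 - y), 0) \<in> regular_normal (normal_graph S) (u, y)"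
  unfolding regular_normal_def mem_Collect_eq
proof (intro conjI allI impI)
  show "(u, y) \<in> normal_graph S" using y by (simp add: normal_graph_def)
  fix e :: real assume "e > 0"
  show "\<exists>d>0. \<forall>p\<in>normal_graph S. norm (p - (u, y)) < d \<longrightarrow>
          (c *\<^sub>R (y1 - y), 0) \<bullet> (p - (u, y)) \<le> e * norm (p - (u, y))"
  proof (intro exI[of _ "e / c"] conjI ballI impI)
    show "e / c > 0" using \<open>e > 0\<close> \<open>c > 0\<close> by simp
    fix p assume p: "p \<in> normal_graph S" and np: "norm (p - (u, y)) < e / c"
    obtain u' y' where p_eq: "p = (u', y')" by (cases p)
    have y': "y' \<in> limiting_normal S u'" using p p_eq by (simp add: normal_graph_def)
    have u': "u' \<in> S" and u: "u \<in> S" using y' y by (auto simp: limiting_normal_def)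
    have y1u': "y1 \<bullet> (u' - u) \<le> 0" using y1 u' limiting_normal_convex_iff[OF \<open>convex S\<close>] by blast
    have y'u: "y' \<bullet> (u - u') \<le> 0" using y' u limiting_normal_convex_iff[OF \<open>convex S\<close>] by blast
    have nu: "norm (u - u') \<le> norm (p - (u, y))" and ny: "norm (y - y') \<le> norm (p - (u, y))"
      using norm_fst_le[of "u' - u" "y' - y"] norm_snd_le[of "y' - y" "u' - u"]
      by (simp_all add: p_eq norm_minus_commute)
    have "y \<bullet> (u - u') = y' \<bullet> (u - u') + (y - y') \<bullet> (u - u')"
      by (simp add: inner_diff_left)
    also have "\<dots> \<le> norm (y - y') * norm (u - u')"
      using y'u Cauchy_Schwarz_ineq2[of "y - y'" "u - u'"] by linarith
    also have "\<dots> \<le> norm (p - (u, y)) * norm (p - (u, y))"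
      using nu ny by (simp add: mult_mono')
    also have "\<dots> \<le> (e / c) * norm (p - (u, y))"
      using np by (intro mult_right_mono) auto
    finally have yu: "y \<bullet> (u - u') \<le> (e / c) * norm (p - (u, y))" .
    have "(c *\<^sub>R (y1 - y), 0) \<bullet> (p - (u, y)) = c * (y1 \<bullet> (u' - u) + y \<bullet> (u - u'))"
      by (simp add: p_eq inner_diff_left inner_diff_right algebra_simps)
    also have "\<dots> \<le> c * ((e / c) * norm (p - (u, y)))"
      using y1u' yu \<open>c > 0\<close> by (intro mult_left_mono) auto
    also have "\<dots> = e * norm (p - (u, y))" using \<open>c > 0\<close> by simp
    finally show "(c *\<^sub>R (y1 - y), 0) \<bullet> (p - (u, y)) \<le> e * norm (p - (u, y))" .
  qed
qed

text \<open>Approach (u, y) along normals y + y2/k; the regular normals (y1 - y2, 0) supplied by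
  monotonicity are constant along this sequence.\<close>

lemma limiting_normal_diff_in_coderiv_normal:
  fixes S :: "'a::real_inner set"
  assumes "convex S" and y: "y \<in> limiting_normal S u"
    and y1: "y1 \<in> limiting_normal S u" and y2: "y2 \<in> limiting_normal S u"
  shows "y1 - y2 \<in> coderiv_normal S u y 0"
proof -
  define ys where "ys = (\<lambda>k::nat. y + (1 / real (Suc k)) *\<^sub>R y2)"
  have reg: "(u, ys k) \<in> normal_graph S \<and> (y1 - y2, 0) \<in> regular_normal (normal_graph S) (u, ys k)" for k
  proof -
    have a: "ys k \<in> limiting_normal S u"
      using limiting_normal_convex_add_scaled[OF \<open>convex S\<close> y y2] by (simp add: ys_def)
    have b: "y + (1 / real (Suc k)) *\<^sub>R y1 \<in> limiting_normal S u"
      using limiting_normal_convex_add_scaled[OF \<open>convex S\<close> y y1] by simp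
    have "real (Suc k) *\<^sub>R ((y + (1 / real (Suc k)) *\<^sub>R y1) - ys k) = y1 - y2"
      by (simp add: ys_def algebra_simps del: of_nat_Suc)
    then show ?thesis
      using regular_normal_normal_graph_convex[OF \<open>convex S\<close> b a, of "real (Suc k)"] a
      by (simp add: normal_graph_def)
  qed
  have "ys \<longlonglongrightarrow> y + 0 *\<^sub>R y2"
    unfolding ys_def by (intro tendsto_intros LIMSEQ_inverse_real_of_nat[unfolded inverse_eq_divide])
  then have "(\<lambda>k. (u, ys k)) \<longlonglongrightarrow> (u, y)" by (intro tendsto_Pair) auto
  moreover have "(u, y) \<in> normal_graph S" using y by (simp add: normal_graph_def)
  ultimately show ?thesis using reg
    unfolding coderiv_normal_def limiting_normal_def
    by (intro CollectI conjI exI[of _ "\<lambda>k. (u, ys k)"] exI[of _ "\<lambda>_. (y1 - y2, 0)"]) auto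
qed

lemma multiplier_unique:
  fixes A :: "'a::euclidean_space \<Rightarrow> 'b::euclidean_space"
  assumes "convex S" and "linear A"
    and y: "y \<in> limiting_normal S u" and y': "y' \<in> limiting_normal S u"
    and KKT: "v + adjoint A y = 0" and KKT': "v + adjoint A y' = 0"
    and SOCQ: "coderiv_normal S u y 0 \<inter> {q. adjoint A q = 0} = {0}"
  shows "y' = y"
proof -
  have "adjoint A y' = - v" "adjoint A y = - v"
    using KKT' KKT by (simp_all only: neg_eq_iff_add_eq_0 eq_commute[of _ "- v"])
  then have "adjoint A (y' - y) = 0" by (simp add: linear_diff[OF adjoint_linear[OF \<open>linear A\<close>]])
  moreover have "y' - y \<in> coderiv_normal S u y 0"
    by (rule limiting_normal_diff_in_coderiv_normal[OF \<open>convex S\<close> y y' y])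
  ultimately have "y' - y \<in> {0}" using SOCQ by blast
  then show ?thesis by simp
qed

lemma span_limiting_normal_inter_ker_adjoint:
  fixes A :: "'a::euclidean_space \<Rightarrow> 'b::euclidean_space"
  assumes "convex S" and "linear A" and y: "y \<in> limiting_normal S u"
    and SOCQ: "coderiv_normal S u y 0 \<inter> {q. adjoint A q = 0} = {0}"
  shows "span (limiting_normal S u) \<inter> adjoint A -` {0} = {0}"
proof -
  have "u \<in> S" using y by (simp add: limiting_normal_def)
  have "q = 0" if "q \<in> span (limiting_normal S u)" "adjoint A q = 0" for q
    using span_limiting_normal_convex[OF \<open>convex S\<close> \<open>u \<in> S\<close> that(1)] SOCQ that(2)
      limiting_normal_diff_in_coderiv_normal[OF \<open>convex S\<close> y] by blast
  moreover have "adjoint A 0 = 0" by (rule linear_0[OF adjoint_linear[OF \<open>linear A\<close>]])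
  ultimately show ?thesis by (auto intro: span_zero)
qed

section \<open>Feasible sequences along critical directions\<close>

lemma orthogonal_comp_span: "(span S)\<^sup>\<bottom> = S\<^sup>\<bottom>"
  by (auto simp: orthogonal_comp_def intro: span_base orthogonal_to_span[OF _ orthogonal_commute[THEN iffD1]])

lemma range_plus_orthogonal_comp_eq_UNIV:
  fixes A :: "'a::euclidean_space \<Rightarrow> 'b::euclidean_space"
  assumes "linear A" and CQ: "span C \<inter> adjoint A -` {0} = {0}"
  shows "range A + C\<^sup>\<bottom> = UNIV"
proof -
  have "range A + C\<^sup>\<bottom> = {x + y |x y. x \<in> range A \<and> y \<in> C\<^sup>\<bottom>}"
    by (auto simp: set_plus_def)
  then have sub: "subspace (range A + C\<^sup>\<bottom>)"
    using subspace_sums[OF linear_subspace_image[OF \<open>linear A\<close> subspace_UNIV] subspace_orthogonal_comp]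
    by simp
  have "range A \<subseteq> range A + C\<^sup>\<bottom>" "C\<^sup>\<bottom> \<subseteq> range A + C\<^sup>\<bottom>"
    using subspace_0[OF subspace_orthogonal_comp, of C] linear_0[OF \<open>linear A\<close>]
    by (force simp: set_plus_def)+
  then have "(range A + C\<^sup>\<bottom>)\<^sup>\<bottom> \<subseteq> (range A)\<^sup>\<bottom> \<inter> C\<^sup>\<bottom>\<^sup>\<bottom>"
    by (auto dest: orthogonal_comp_anti_mono)
  also have "(range A)\<^sup>\<bottom> = adjoint A -` {0}"
    using ker_orthogonal_comp_adjoint[OF adjoint_linear[OF \<open>linear A\<close>]]
    by (simp add: adjoint_adjoint[OF \<open>linear A\<close>])
  also have "C\<^sup>\<bottom>\<^sup>\<bottom> = span C"
    using orthogonal_comp_self[OF subspace_span] by (simp add: orthogonal_comp_span)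
  finally have "(range A + C\<^sup>\<bottom>)\<^sup>\<bottom> \<subseteq> {0}" using CQ by blast
  then have "(range A + C\<^sup>\<bottom>)\<^sup>\<bottom> = {0}"
    using subspace_0[OF subspace_orthogonal_comp] by blast
  then show ?thesis using orthogonal_comp_self[OF sub] by simp
qed

lemma linear_right_inverse_modulo_orthogonal_comp:
  fixes A :: "'a::euclidean_space \<Rightarrow> 'b::euclidean_space"
  assumes "linear A" and "span C \<inter> adjoint A -` {0} = {0}"
  obtains H :: "'b \<Rightarrow> 'a" and P :: "'b \<Rightarrow> 'b"
  where "linear H" "linear P" "\<And>q. A (H q) + P q = q" "\<And>q. P q \<in> C\<^sup>\<bottom>"
proof -
  define M where "M p = A (fst p) + snd p" for p :: "'a \<times> 'b"
  have "linear M"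
    by (auto intro!: linearI simp: M_def linear_add[OF \<open>linear A\<close>] linear_scale[OF \<open>linear A\<close>]
        scaleR_add_right)
  moreover have "subspace (UNIV \<times> (C\<^sup>\<bottom>))"
    by (intro subspace_Times subspace_UNIV subspace_orthogonal_comp)
  ultimately obtain G where G: "range G \<subseteq> UNIV \<times> (C\<^sup>\<bottom>)" "linear G"
    "\<And>q. q \<in> M ` (UNIV \<times> (C\<^sup>\<bottom>)) \<Longrightarrow> M (G q) = q"
    using linear_exists_right_inverse_on by blast
  have "M ` (UNIV \<times> (C\<^sup>\<bottom>)) = range A + C\<^sup>\<bottom>"
    by (force simp: M_def set_plus_def)
  then have "A (fst (G q)) + snd (G q) = q" for q
    using G(3) range_plus_orthogonal_comp_eq_UNIV[OF assms] by (simp add: M_def)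
  moreover have "linear (fst \<circ> G)" "linear (snd \<circ> G)"
    using G(2) by (auto intro: linear_compose linear_fst linear_snd)
  moreover have "snd (G q) \<in> C\<^sup>\<bottom>" for q
    using subsetD[OF G(1) rangeI, of q] by (simp add: mem_Times_iff)
  ultimately show ?thesis using that[of "fst \<circ> G" "snd \<circ> G"] by simp
qed

lemma tendsto_difference_quotient_sequentially:
  fixes g :: "'a::real_normed_vector \<Rightarrow> 'b::real_normed_vector"
  assumes gd: "(g has_derivative A) (at xb)" and tpos: "\<And>k. t k > 0" and "t \<longlonglongrightarrow> 0"
    and ws: "ws \<longlonglongrightarrow> d"
  shows "(\<lambda>k. (g (xb + t k *\<^sub>R ws k) - g xb) /\<^sub>R t k) \<longlonglongrightarrow> A d"
proof -
  have lin: "linear A" using has_derivative_linear[OF gd] .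
  have "(\<lambda>k. (g (xb + t k *\<^sub>R ws k) - g xb) /\<^sub>R t k - A (ws k)) \<longlonglongrightarrow> 0"
  proof (rule LIMSEQ_I)
    fix r :: real assume "r > 0"
    define \<epsilon> where "\<epsilon> = r / (2 * (norm d + 1))"
    have "norm d + 1 > 0" by (simp add: add_nonneg_pos)
    then have "\<epsilon> > 0" and \<epsilon>_eq: "\<epsilon> * (norm d + 1) = r / 2"
      using \<open>r > 0\<close> by (simp_all add: \<epsilon>_def field_simps)
    then obtain \<delta> where "\<delta> > 0"
      and \<delta>: "\<And>y. norm (y - xb) < \<delta> \<Longrightarrow> norm (g y - g xb - A (y - xb)) \<le> \<epsilon> * norm (y - xb)"
      using gd unfolding has_derivative_within_alt by blast
    have "(\<lambda>k. norm (t k *\<^sub>R ws k)) \<longlonglongrightarrow> norm (0 *\<^sub>R d)" by (intro tendsto_intros assms)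
    then have "eventually (\<lambda>k. norm (t k *\<^sub>R ws k) < \<delta>) sequentially"
      using \<open>\<delta> > 0\<close> by (auto dest: order_tendstoD(2))
    moreover have "eventually (\<lambda>k. norm (ws k) < norm d + 1) sequentially"
      using tendsto_norm[OF ws] by (rule order_tendstoD(2)) simp
    ultimately have "eventually (\<lambda>k. norm ((g (xb + t k *\<^sub>R ws k) - g xb) /\<^sub>R t k - A (ws k) - 0) < r)
      sequentially"
    proof eventually_elim
      case (elim k)
      have "(g (xb + t k *\<^sub>R ws k) - g xb) /\<^sub>R t k - A (ws k)
            = (g (xb + t k *\<^sub>R ws k) - g xb - A ((xb + t k *\<^sub>R ws k) - xb)) /\<^sub>R t k"
        using tpos[of k] by (simp add: linear_scale[OF lin] scaleR_diff_right)
      then have "norm ((g (xb + t k *\<^sub>R ws k) - g xb) /\<^sub>R t k - A (ws k))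
            = norm (g (xb + t k *\<^sub>R ws k) - g xb - A ((xb + t k *\<^sub>R ws k) - xb)) / t k"
        using tpos[of k] by (simp add: divide_inverse_commute)
      also have "\<dots> \<le> \<epsilon> * norm (t k *\<^sub>R ws k) / t k"
        using \<delta>[of "xb + t k *\<^sub>R ws k"] elim tpos[of k] by (intro divide_right_mono) auto
      also have "\<dots> = \<epsilon> * norm (ws k)" using tpos[of k] by simp
      also have "\<dots> \<le> \<epsilon> * (norm d + 1)" using elim \<open>\<epsilon> > 0\<close> by (intro mult_left_mono) auto
      also have "\<dots> < r" using \<open>r > 0\<close> \<epsilon>_eq by simp
      finally show ?case by simp
    qed
    then show "\<exists>no. \<forall>n\<ge>no. norm ((g (xb + t n *\<^sub>R ws n) - g xb) /\<^sub>R t n - A (ws n) - 0) < r"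
      by (simp add: eventually_sequentially)
  qed
  moreover have "(\<lambda>k. A (ws k)) \<longlonglongrightarrow> A d"
    by (intro bounded_linear.tendsto[OF has_derivative_bounded_linear[OF gd]] ws)
  ultimately show ?thesis using tendsto_add by fastforce
qed

lemma limiting_normal_inner_derivative_tangent_le:
  fixes g :: "'a::real_normed_vector \<Rightarrow> 'b::real_inner"
  assumes "convex \<Theta>" and gd: "(g has_derivative A) (at xb)"
    and a: "a \<in> limiting_normal \<Theta> (g xb)" and d: "d \<in> tangent_cone {x. g x \<in> \<Theta>} xb"
  shows "a \<bullet> A d \<le> 0"
proof -
  obtain t ws where tw: "\<And>k. t k > 0" "\<And>k. g (xb + t k *\<^sub>R ws k) \<in> \<Theta>" "t \<longlonglongrightarrow> 0" "ws \<longlonglongrightarrow> d"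
    using d unfolding tangent_cone_def by blast
  show ?thesis
  proof (rule LIMSEQ_le_const2)
    show "(\<lambda>k. a \<bullet> ((g (xb + t k *\<^sub>R ws k) - g xb) /\<^sub>R t k)) \<longlonglongrightarrow> a \<bullet> A d"
      by (intro tendsto_intros tendsto_difference_quotient_sequentially[OF gd] tw)
    have "a \<bullet> (g (xb + t k *\<^sub>R ws k) - g xb) \<le> 0" for k
      using a tw(2) limiting_normal_convex_iff[OF \<open>convex \<Theta>\<close>] by blast
    then show "\<exists>N. \<forall>k\<ge>N. a \<bullet> ((g (xb + t k *\<^sub>R ws k) - g xb) /\<^sub>R t k) \<le> 0"
      using tw(1) by (intro exI[of _ 0] allI impI) (simp add: mult_nonneg_nonpos less_imp_le)
  qed
qed

text \<open>The Brouwer fixed point theorem solves the equation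
  g (xb + t d + H y) = g xb + t A d - P y for y: the map y \<mapsto> y - F y, where F y is the
  defect of this equation, is the negated linearization error of g and hence maps the ball into
  itself.\<close>

lemma correction_at_scale:
  fixes g :: "'a::euclidean_space \<Rightarrow> 'b::euclidean_space"
  assumes lin_err: "\<And>x. norm (x - xb) < \<delta> \<Longrightarrow> norm (g x - g xb - A (x - xb)) \<le> \<eta> * norm (x - xb)"
    and gc: "continuous_on (ball xb \<delta>) g" and "linear A" and "linear H" and "linear P"
    and inv: "\<And>q. A (H q) + P q = q" and H_bound: "\<And>q. norm (H q) \<le> \<beta> * norm q"
    and "\<beta> \<ge> 0" "\<eta> \<ge> 0" "\<rho> > 0" "t \<ge> 0"
    and small: "t * norm d + \<beta> * \<rho> < \<delta>" and contract: "\<eta> * (t * norm d + \<beta> * \<rho>) \<le> \<rho>"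
  shows "\<exists>y. norm y \<le> \<rho> \<and> g (xb + t *\<^sub>R d + H y) = g xb + t *\<^sub>R A d - P y"
proof -
  have h_le: "norm (t *\<^sub>R d + H y) \<le> t * norm d + \<beta> * \<rho>" if "y \<in> cball 0 \<rho>" for y
    using norm_triangle_ineq[of "t *\<^sub>R d" "H y"] H_bound[of y] that \<open>t \<ge> 0\<close>
      mult_left_mono[of "norm y" \<rho> \<beta>] \<open>\<beta> \<ge> 0\<close>
    by auto
  define F where "F y = g (xb + t *\<^sub>R d + H y) - g xb - t *\<^sub>R A d + P y" for y
  have "continuous_on (cball 0 \<rho>) (\<lambda>y. g (xb + t *\<^sub>R d + H y))"
  proof (rule continuous_on_compose2[OF gc])
    show "continuous_on (cball 0 \<rho>) (\<lambda>y. xb + t *\<^sub>R d + H y)"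
      by (intro continuous_intros linear_continuous_on \<open>linear H\<close>[unfolded linear_conv_bounded_linear])
    have "dist xb (xb + t *\<^sub>R d + H y) = norm (t *\<^sub>R d + H y)" for y
      using dist_add_cancel[of xb 0 "t *\<^sub>R d + H y"] by (simp add: add.assoc dist_0_norm)
    then show "(\<lambda>y. xb + t *\<^sub>R d + H y) ` cball 0 \<rho> \<subseteq> ball xb \<delta>"
      using h_le small by fastforce
  qed
  then have "continuous_on (cball 0 \<rho>) F"
    unfolding F_def
    by (intro continuous_on_add continuous_on_diff continuous_on_const
        linear_continuous_on[OF \<open>linear P\<close>[unfolded linear_conv_bounded_linear]])
  moreover have "0 + (y - F y) \<in> cball 0 \<rho>" if y: "y \<in> cball 0 \<rho>" for y
  proof -
    define h where "h = t *\<^sub>R d + H y"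
    have "A h = t *\<^sub>R A d + y - P y"
      using inv[of y] by (simp add: h_def linear_add[OF \<open>linear A\<close>] linear_scale[OF \<open>linear A\<close>] algebra_simps)
    then have "y - F y = - (g (xb + h) - g xb - A ((xb + h) - xb))"
      by (simp add: F_def h_def add.assoc)
    then have "norm (y - F y) = norm (g (xb + h) - g xb - A ((xb + h) - xb))"
      by (simp only: norm_minus_cancel)
    also have "\<dots> \<le> \<eta> * norm h"
      using lin_err[of "xb + h"] h_le[OF y] small by (simp add: h_def)
    also have "\<dots> \<le> \<rho>"
      using mult_left_mono[OF h_le[OF y] \<open>\<eta> \<ge> 0\<close>] contract by (simp add: h_def)
    finally show ?thesis by simp
  qed
  ultimately obtain y where "y \<in> cball 0 \<rho>" "F y = 0"
    using brouwer_surjective_cball[OF _ \<open>\<rho> > 0\<close>, of 0 F 0 "{0}"] by auto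
  then show ?thesis by (intro exI[of _ y]) (simp add: F_def algebra_simps)
qed

lemma exists_small_correction:
  fixes g :: "'a::euclidean_space \<Rightarrow> 'b::euclidean_space"
  assumes gd: "(g has_derivative A) (at xb)" and "r0 > 0" and gc: "continuous_on (ball xb r0) g"
    and "linear H" and "linear P" and inv: "\<And>q. A (H q) + P q = q" and "\<epsilon> > 0"
  shows "\<exists>\<tau>>0. \<forall>t. 0 < t \<and> t < \<tau> \<longrightarrow>
           (\<exists>r q. norm r \<le> \<epsilon> * t \<and> g (xb + t *\<^sub>R d + r) = g xb + t *\<^sub>R A d + P q)"
proof -
  obtain \<beta> where "\<beta> > 0" and \<beta>: "\<And>q. norm (H q) \<le> \<beta> * norm q"
    using bounded_linear.pos_bounded[OF \<open>linear H\<close>[unfolded linear_conv_bounded_linear]]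
    by (auto simp: mult.commute)
  define M where "M = norm d + \<epsilon>"
  have "M > 0" using \<open>\<epsilon> > 0\<close> by (simp add: M_def add_nonneg_pos)
  define \<eta> where "\<eta> = \<epsilon> / (\<beta> * M)"
  have "\<eta> > 0" using \<open>\<epsilon> > 0\<close> \<open>\<beta> > 0\<close> \<open>M > 0\<close> by (simp add: \<eta>_def)
  then obtain \<delta>1 where "\<delta>1 > 0"
    and \<delta>1: "\<And>x. norm (x - xb) < \<delta>1 \<Longrightarrow> norm (g x - g xb - A (x - xb)) \<le> \<eta> * norm (x - xb)"
    using gd unfolding has_derivative_within_alt by blast
  define \<delta> where "\<delta> = min \<delta>1 r0"
  have "continuous_on (ball xb \<delta>) g" using gc by (rule continuous_on_subset) (simp add: \<delta>_def subset_ball)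
  show ?thesis
  proof (intro exI[of _ "\<delta> / M"] conjI allI impI)
    show "\<delta> / M > 0" using \<open>\<delta>1 > 0\<close> \<open>r0 > 0\<close> \<open>M > 0\<close> by (simp add: \<delta>_def)
    fix t :: real assume t: "0 < t \<and> t < \<delta> / M"
    define \<rho> where "\<rho> = \<epsilon> * t / \<beta>"
    have "t * norm d + \<beta> * \<rho> = t * M" using \<open>\<beta> > 0\<close> by (simp add: \<rho>_def M_def algebra_simps)
    moreover have "t * M < \<delta>" using t \<open>M > 0\<close> by (simp add: pos_less_divide_eq)
    moreover have "\<eta> * (t * M) = \<rho>" using \<open>\<beta> > 0\<close> \<open>M > 0\<close> by (simp add: \<eta>_def \<rho>_def)
    ultimately have "t * norm d + \<beta> * \<rho> < \<delta>" "\<eta> * (t * norm d + \<beta> * \<rho>) \<le> \<rho>" by simp_all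
    moreover have "\<rho> > 0" using \<open>\<epsilon> > 0\<close> \<open>\<beta> > 0\<close> t by (simp add: \<rho>_def)
    moreover have "norm (x - xb) < \<delta> \<Longrightarrow> norm (g x - g xb - A (x - xb)) \<le> \<eta> * norm (x - xb)" for x
      using \<delta>1 by (simp add: \<delta>_def)
    ultimately obtain y where y: "norm y \<le> \<rho>" "g (xb + t *\<^sub>R d + H y) = g xb + t *\<^sub>R A d - P y"
      using correction_at_scale[OF _ \<open>continuous_on (ball xb \<delta>) g\<close> has_derivative_linear[OF gd]
          \<open>linear H\<close> \<open>linear P\<close> inv \<beta>] \<open>\<beta> > 0\<close> \<open>\<eta> > 0\<close> t
      by (metis less_imp_le)
    have "norm (H y) \<le> \<epsilon> * t"
      using \<beta>[of y] y(1) \<open>\<beta> > 0\<close> mult_left_mono[of "norm y" \<rho> \<beta>] by (simp add: \<rho>_def)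
    moreover have "- P y = P (- y)" using linear_neg[OF \<open>linear P\<close>] by simp
    ultimately show "\<exists>r q. norm r \<le> \<epsilon> * t \<and> g (xb + t *\<^sub>R d + r) = g xb + t *\<^sub>R A d + P q"
      using y(2) by (metis diff_conv_add_uminus)
  qed
qed

lemma correction_sequence:
  fixes g :: "'a::euclidean_space \<Rightarrow> 'b::euclidean_space"
  assumes gd: "(g has_derivative A) (at xb)" and "r0 > 0" and gc: "continuous_on (ball xb r0) g"
    and "linear H" and "linear P" and inv: "\<And>q. A (H q) + P q = q"
  obtains T ds q where "\<And>n. T n > 0" "T \<longlonglongrightarrow> 0" "ds \<longlonglongrightarrow> d"
    "\<And>n. g (xb + T n *\<^sub>R ds n) = g xb + T n *\<^sub>R A d + P (q n)"
proof -
  have "\<exists>t r q. 0 < t \<and> t \<le> 1 / real (Suc n) \<and> norm r \<le> t / real (Suc n) \<and>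
          g (xb + t *\<^sub>R d + r) = g xb + t *\<^sub>R A d + P q" for n
  proof -
    obtain \<tau> where "\<tau> > 0" and \<tau>: "\<forall>t. 0 < t \<and> t < \<tau> \<longrightarrow>
        (\<exists>r q. norm r \<le> 1 / real (Suc n) * t \<and> g (xb + t *\<^sub>R d + r) = g xb + t *\<^sub>R A d + P q)"
      using exists_small_correction[OF assms, where \<epsilon>="1 / real (Suc n)" and d=d] by auto
    define t where "t = min (\<tau> / 2) (1 / real (Suc n))"
    have "0 < t" "t < \<tau>" "t \<le> 1 / real (Suc n)" using \<open>\<tau> > 0\<close> by (auto simp: t_def)
    then obtain r q where "norm r \<le> 1 / real (Suc n) * t"
        "g (xb + t *\<^sub>R d + r) = g xb + t *\<^sub>R A d + P q"
      using \<tau> by blast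
    then show ?thesis using \<open>0 < t\<close> \<open>t \<le> 1 / real (Suc n)\<close>
      by (intro exI[of _ t] exI[of _ r] exI[of _ q]) simp
  qed
  then obtain T R q where T: "\<And>n. 0 < T n" "\<And>n. T n \<le> 1 / real (Suc n)"
    and R: "\<And>n. norm (R n) \<le> T n / real (Suc n)"
    and g_eq: "\<And>n. g (xb + T n *\<^sub>R d + R n) = g xb + T n *\<^sub>R A d + P (q n)"
    by metis
  define ds where "ds n = d + (1 / T n) *\<^sub>R R n" for n
  have "xb + T n *\<^sub>R ds n = xb + T n *\<^sub>R d + R n" for n
    using T(1)[of n] by (simp add: ds_def scaleR_add_right)
  then have g_ds: "g (xb + T n *\<^sub>R ds n) = g xb + T n *\<^sub>R A d + P (q n)" for n
    by (simp only: g_eq)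
  have lim: "(\<lambda>n. 1 / real (Suc n)) \<longlonglongrightarrow> 0"
    by (rule LIMSEQ_inverse_real_of_nat[unfolded inverse_eq_divide])
  have T0: "T \<longlonglongrightarrow> 0"
  proof (rule tendsto_sandwich[of "\<lambda>_. 0" _ _ "\<lambda>n. 1 / real (Suc n)"])
    show "\<forall>\<^sub>F n in sequentially. 0 \<le> T n" using T(1) by (simp add: less_imp_le)
    show "\<forall>\<^sub>F n in sequentially. T n \<le> 1 / real (Suc n)" using T(2) by simp
  qed (use lim in auto)
  have "(\<lambda>n. (1 / T n) *\<^sub>R R n) \<longlonglongrightarrow> 0"
  proof (rule tendsto_norm_zero_cancel, rule tendsto_sandwich[of "\<lambda>_. 0" _ _ "\<lambda>n. 1 / real (Suc n)"])
    have "norm ((1 / T n) *\<^sub>R R n) \<le> 1 / real (Suc n)" for n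
      using R[of n] T(1)[of n] by (simp add: divide_le_eq)
    then show "\<forall>\<^sub>F n in sequentially. norm ((1 / T n) *\<^sub>R R n) \<le> 1 / real (Suc n)"
      by simp
  qed (use lim in auto)
  then have "ds \<longlonglongrightarrow> d + 0" unfolding ds_def by (intro tendsto_add tendsto_const)
  with that[OF T(1) T0 _ g_ds] show ?thesis by simp
qed

text \<open>Near a point u, a polyhedron is cut out by its active constraints alone, whose normals
  lie in the normal cone at u.\<close>

lemma polyhedron_eventually_mem:
  fixes \<Theta> :: "'a::euclidean_space set"
  assumes "polyhedron \<Theta>" and "u \<in> \<Theta>" and p: "(p \<longlongrightarrow> u) F"
    and normal: "\<And>x a. a \<in> limiting_normal \<Theta> u \<Longrightarrow> a \<bullet> (p x - u) \<le> 0"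
  shows "eventually (\<lambda>x. p x \<in> \<Theta>) F"
proof -
  obtain \<H> where "finite \<H>" and \<Theta>_eq: "\<Theta> = \<Inter> \<H>"
    and halfspace: "\<forall>h\<in>\<H>. \<exists>a b. a \<noteq> 0 \<and> h = {x. a \<bullet> x \<le> b}"
    using \<open>polyhedron \<Theta>\<close> unfolding polyhedron_def by blast
  have "eventually (\<lambda>x. p x \<in> h) F" if "h \<in> \<H>" for h
  proof -
    obtain a b where h_eq: "h = {x. a \<bullet> x \<le> b}" using halfspace \<open>h \<in> \<H>\<close> by blast
    have sub: "\<Theta> \<subseteq> {x. a \<bullet> x \<le> b}" using \<Theta>_eq \<open>h \<in> \<H>\<close> h_eq by blast
    show ?thesis
    proof (cases "a \<bullet> u = b")
      case True
      then have "a \<in> limiting_normal \<Theta> u"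
        using sub \<open>u \<in> \<Theta>\<close> polyhedron_imp_convex[OF \<open>polyhedron \<Theta>\<close>]
        by (auto simp: limiting_normal_convex_iff inner_diff_right)
      then have "a \<bullet> p x \<le> b" for x using normal[of a x] True by (simp add: inner_diff_right)
      then show ?thesis by (simp add: h_eq)
    next
      case False
      then have "a \<bullet> u < b" using sub \<open>u \<in> \<Theta>\<close> by fastforce
      then have "eventually (\<lambda>x. a \<bullet> p x < b) F"
        using tendsto_inner[OF tendsto_const p] by (rule order_tendstoD(2)[rotated])
      then show ?thesis by eventually_elim (simp add: h_eq)
    qed
  qed
  then have "eventually (\<lambda>x. \<forall>h\<in>\<H>. p x \<in> h) F"
    using \<open>finite \<H>\<close> by (simp add: eventually_ball_finite)
  then show ?thesis by eventually_elim (simp add: \<Theta>_eq)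
qed

lemma critical_direction_feasible_sequence:
  fixes g :: "'a::euclidean_space \<Rightarrow> 'b::euclidean_space"
  assumes "polyhedron \<Theta>" and "g xb \<in> \<Theta>" and gd: "(g has_derivative A) (at xb)"
    and "r > 0" and gc: "continuous_on (ball xb r) g"
    and CQ: "span (limiting_normal \<Theta> (g xb)) \<inter> adjoint A -` {0} = {0}"
    and y: "y \<in> limiting_normal \<Theta> (g xb)" and "y \<bullet> A d = 0"
    and d: "d \<in> tangent_cone {x. g x \<in> \<Theta>} xb"
  obtains T ds where "\<And>n. T n > 0" "T \<longlonglongrightarrow> 0" "ds \<longlonglongrightarrow> d"
    "eventually (\<lambda>n. g (xb + T n *\<^sub>R ds n) \<in> \<Theta>) sequentially"
    "\<And>n. y \<bullet> g (xb + T n *\<^sub>R ds n) = y \<bullet> g xb"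
proof -
  let ?C = "limiting_normal \<Theta> (g xb)"
  obtain H P where "linear H" "linear P" and inv: "\<And>q. A (H q) + P q = q"
    and P: "\<And>q. P q \<in> ?C\<^sup>\<bottom>"
    using linear_right_inverse_modulo_orthogonal_comp[OF has_derivative_linear[OF gd] CQ] by blast
  obtain T ds q where T: "\<And>n. T n > 0" "T \<longlonglongrightarrow> 0" and "ds \<longlonglongrightarrow> d"
    and g_eq: "\<And>n. g (xb + T n *\<^sub>R ds n) = g xb + T n *\<^sub>R A d + P (q n)"
    using correction_sequence[OF gd \<open>r > 0\<close> gc \<open>linear H\<close> \<open>linear P\<close> inv] by blast
  have P_orth: "a \<bullet> P q' = 0" if "a \<in> ?C" for a q'
    using P[of q'] that by (auto simp: orthogonal_comp_def orthogonal_def)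
  have "(\<lambda>n. xb + T n *\<^sub>R ds n) \<longlonglongrightarrow> xb + 0 *\<^sub>R d"
    by (intro tendsto_intros T \<open>ds \<longlonglongrightarrow> d\<close>)
  then have "(\<lambda>n. g (xb + T n *\<^sub>R ds n)) \<longlonglongrightarrow> g xb"
    using isCont_tendsto_compose[OF has_derivative_continuous[OF gd]] by simp
  moreover have "a \<bullet> (g (xb + T n *\<^sub>R ds n) - g xb) \<le> 0" if "a \<in> ?C" for a n
    using limiting_normal_inner_derivative_tangent_le[OF polyhedron_imp_convex[OF \<open>polyhedron \<Theta>\<close>]
        gd that d] T(1)[of n] P_orth[OF that]
    by (simp add: g_eq inner_add_right mult_nonneg_nonpos less_imp_le)
  ultimately have "eventually (\<lambda>n. g (xb + T n *\<^sub>R ds n) \<in> \<Theta>) sequentially"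
    using polyhedron_eventually_mem[OF \<open>polyhedron \<Theta>\<close> \<open>g xb \<in> \<Theta>\<close>] by blast
  moreover have "y \<bullet> g (xb + T n *\<^sub>R ds n) = y \<bullet> g xb" for n
    using P_orth[OF y] \<open>y \<bullet> A d = 0\<close> by (simp add: g_eq inner_add_right)
  ultimately show ?thesis using that T \<open>ds \<longlonglongrightarrow> d\<close> by blast
qed

section \<open>Second-order estimates\<close>

lemma increment_le_of_derivative_increment_le:
  fixes \<phi> \<phi>' :: "real \<Rightarrow> real"
  assumes deriv: "\<And>s. 0 \<le> s \<Longrightarrow> s \<le> 1 \<Longrightarrow> (\<phi> has_real_derivative \<phi>' s) (at s)"
    and bound: "\<And>s. 0 \<le> s \<Longrightarrow> s \<le> 1 \<Longrightarrow> \<phi>' s - \<phi>' 0 \<le> s * M"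
  shows "\<phi> 1 - \<phi> 0 \<le> \<phi>' 0 + M / 2"
proof -
  define \<psi> where "\<psi> s = \<phi> s - s * \<phi>' 0 - s\<^sup>2 * M / 2" for s
  have "\<psi> 1 \<le> \<psi> 0"
  proof (rule DERIV_nonpos_imp_nonincreasing[of 0 1 \<psi>])
    fix s :: real assume s: "0 \<le> s" "s \<le> 1"
    have "(\<psi> has_real_derivative (\<phi>' s - \<phi>' 0 - s * M)) (at s)"
      unfolding \<psi>_def using deriv[OF s] by (auto intro!: derivative_eq_intros)
    then show "\<exists>y. (\<psi> has_real_derivative y) (at s) \<and> y \<le> 0" using bound[OF s] by force
  qed simp
  then show ?thesis by (simp add: \<psi>_def)
qed

lemma has_real_derivative_lagrangian_segment:
  fixes f :: "'a::real_inner \<Rightarrow> real" and g :: "'a \<Rightarrow> 'b::real_inner"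
  assumes fd: "(f has_derivative (\<lambda>v. a \<bullet> v)) (at (x + s *\<^sub>R h))"
    and gd: "(g has_derivative G) (at (x + s *\<^sub>R h))"
  shows "((\<lambda>s. f (x + s *\<^sub>R h) + y \<bullet> g (x + s *\<^sub>R h)) has_real_derivative (a \<bullet> h + y \<bullet> G h)) (at s)"
proof -
  have seg: "((\<lambda>s. x + s *\<^sub>R h) has_derivative (\<lambda>r. r *\<^sub>R h)) (at s)"
    by (auto intro!: derivative_eq_intros)
  have "((\<lambda>s. f (x + s *\<^sub>R h) + y \<bullet> g (x + s *\<^sub>R h)) has_derivative
      (\<lambda>r. a \<bullet> (r *\<^sub>R h) + y \<bullet> G (r *\<^sub>R h))) (at s)"
    by (intro has_derivative_add has_derivative_compose[OF seg fd]
        has_derivative_inner_right has_derivative_compose[OF seg gd])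
  moreover have "(\<lambda>r. a \<bullet> (r *\<^sub>R h) + y \<bullet> G (r *\<^sub>R h)) = (\<lambda>r. (a \<bullet> h + y \<bullet> G h) * r)"
    using linear_scale[OF has_derivative_linear[OF gd]] by (auto simp: algebra_simps)
  ultimately show ?thesis by (simp add: has_field_derivative_def)
qed

text \<open>The regular normal (z, -w) to the graph of the gradient, tested at the graph point over
  xb + u, gives z \<bullet> u \<le> w \<bullet> (df (xb + u) - df xb) + o(norm u).\<close>

lemma gradient_increment_inner_le:
  fixes df :: "'a::real_inner \<Rightarrow> 'a"
  assumes Lip: "norm (df (xb + u) - df xb) \<le> L * norm u" and "L \<ge> 0" and "xb + u \<in> U"
    and z: "\<forall>p\<in>{(x, df x) |x. x \<in> U}. norm (p - (xb, df xb)) < \<delta> \<longrightarrow>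
                 (z, - w) \<bullet> (p - (xb, df xb)) \<le> \<epsilon> * norm (p - (xb, df xb))"
    and small: "(1 + L) * norm u < \<delta>" and "\<epsilon> > 0"
    and u: "u = (s * t) *\<^sub>R d" and "s \<ge> 0" and "t > 0"
  shows "(df (xb + u) - df xb) \<bullet> (t *\<^sub>R d) \<le>
           s * (t\<^sup>2 * (- (z \<bullet> d) + \<epsilon> * (1 + L) * norm d + L * norm (d + w) * norm d))"
proof -
  define \<Delta> where "\<Delta> = df (xb + u) - df xb"
  have pair_le: "norm (u, \<Delta>) \<le> (1 + L) * norm u"
    using norm_Pair_le[of u \<Delta>] Lip by (simp add: \<Delta>_def algebra_simps)
  have "(xb + u, df (xb + u)) - (xb, df xb) = (u, \<Delta>)" by (simp add: \<Delta>_def)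
  then have "(z, - w) \<bullet> (u, \<Delta>) \<le> \<epsilon> * norm (u, \<Delta>)"
    using z \<open>xb + u \<in> U\<close> pair_le small by force
  also have "\<dots> \<le> \<epsilon> * ((1 + L) * norm u)" using pair_le \<open>\<epsilon> > 0\<close> by (intro mult_left_mono) auto
  finally have zu: "z \<bullet> u - w \<bullet> \<Delta> \<le> \<epsilon> * ((1 + L) * norm u)" by simp
  have "\<Delta> \<bullet> d + \<Delta> \<bullet> w \<le> L * norm u * norm (d + w)"
    using norm_cauchy_schwarz[of \<Delta> "d + w"] mult_right_mono[OF Lip, of "norm (d + w)"]
    by (simp add: \<Delta>_def inner_add_right)
  then have "\<Delta> \<bullet> d \<le> L * norm u * norm (d + w) + \<epsilon> * ((1 + L) * norm u) - z \<bullet> u"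
    using zu by (simp add: inner_commute)
  then have "\<Delta> \<bullet> (t *\<^sub>R d) \<le> t * (L * norm u * norm (d + w) + \<epsilon> * ((1 + L) * norm u) - z \<bullet> u)"
    using \<open>t > 0\<close> by (simp add: mult_left_mono)
  also have "\<dots> = s * (t\<^sup>2 * (- (z \<bullet> d) + \<epsilon> * (1 + L) * norm d + L * norm (d + w) * norm d))"
    using \<open>s \<ge> 0\<close> \<open>t > 0\<close> by (simp add: u power2_eq_square algebra_simps)
  finally show ?thesis by (simp add: \<Delta>_def)
qed

lemma jacobian_increment_inner_le:
  fixes dg :: "'a::real_normed_vector \<Rightarrow> 'a \<Rightarrow>\<^sub>L 'b::real_inner"
    and ddg :: "'a \<Rightarrow>\<^sub>L ('a \<Rightarrow>\<^sub>L 'b)"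
  assumes lin_err: "norm (dg (xb + u) - dg xb - ddg u) \<le> \<epsilon> * norm u"
    and u: "u = (s * t) *\<^sub>R d" and "s \<ge> 0" and "t > 0"
  shows "y \<bullet> ((dg (xb + u) - dg xb) (t *\<^sub>R d)) \<le>
           s * (t\<^sup>2 * (y \<bullet> (ddg d d) + norm y * \<epsilon> * (norm d)\<^sup>2))"
proof -
  define R where "R = dg (xb + u) - dg xb - ddg u"
  have split: "(dg (xb + u) - dg xb) (t *\<^sub>R d) = ddg u (t *\<^sub>R d) + R (t *\<^sub>R d)"
    by (simp add: R_def blinfun.diff_left)
  have quadratic: "ddg u (t *\<^sub>R d) = (s * t * t) *\<^sub>R ddg d d"
    by (simp add: u blinfun.scaleR_left blinfun.scaleR_right)
  have "y \<bullet> R (t *\<^sub>R d) \<le> norm y * norm (R (t *\<^sub>R d))" by (rule norm_cauchy_schwarz)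
  also have "\<dots> \<le> norm y * (norm R * norm (t *\<^sub>R d))"
    by (intro mult_left_mono norm_blinfun) auto
  also have "\<dots> \<le> norm y * ((\<epsilon> * norm u) * norm (t *\<^sub>R d))"
    using lin_err by (intro mult_left_mono mult_right_mono) (auto simp: R_def)
  also have "\<dots> = s * (t\<^sup>2 * (norm y * \<epsilon> * (norm d)\<^sup>2))"
    using \<open>s \<ge> 0\<close> \<open>t > 0\<close> by (simp add: u power2_eq_square algebra_simps)
  finally show ?thesis
    unfolding split quadratic inner_add_right by (simp add: power2_eq_square algebra_simps)
qed

lemma lagrangian_upper_estimate:
  fixes f :: "'a::euclidean_space \<Rightarrow> real" and df :: "'a \<Rightarrow> 'a"
    and g :: "'a \<Rightarrow> 'b::euclidean_space" and dg :: "'a \<Rightarrow> 'a \<Rightarrow>\<^sub>L 'b"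
    and ddg :: "'a \<Rightarrow>\<^sub>L ('a \<Rightarrow>\<^sub>L 'b)"
  assumes "open U" "xb \<in> U" and f_deriv: "\<forall>x\<in>U. (f has_derivative (\<lambda>h. df x \<bullet> h)) (at x)"
    and Lip: "\<And>x x'. x \<in> U \<Longrightarrow> x' \<in> U \<Longrightarrow> norm (df x - df x') \<le> L * dist x x'" and "L \<ge> 0"
    and "open V" "xb \<in> V" and g_deriv: "\<forall>x\<in>V. (g has_derivative blinfun_apply (dg x)) (at x)"
    and dg_deriv: "(dg has_derivative blinfun_apply ddg) (at xb)"
    and KKT: "\<And>h. df xb \<bullet> h + yb \<bullet> dg xb h = 0"
    and z: "(z, - w) \<in> regular_normal {(x, df x) | x. x \<in> U} (xb, df xb)" and "\<epsilon> > 0"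
  shows "\<exists>\<rho>>0. \<forall>t d. 0 < t \<longrightarrow> norm (t *\<^sub>R d) < \<rho> \<longrightarrow>
           f (xb + t *\<^sub>R d) + yb \<bullet> g (xb + t *\<^sub>R d) - f xb - yb \<bullet> g xb \<le>
           t\<^sup>2 / 2 * (- (z \<bullet> d) + yb \<bullet> ddg d d + \<epsilon> * (1 + L) * norm d
                      + L * norm (d + w) * norm d + norm yb * \<epsilon> * (norm d)\<^sup>2)"
proof -
  obtain \<delta>1 where "\<delta>1 > 0" and \<delta>1: "\<forall>p\<in>{(x, df x) |x. x \<in> U}. norm (p - (xb, df xb)) < \<delta>1 \<longrightarrow>
      (z, - w) \<bullet> (p - (xb, df xb)) \<le> \<epsilon> * norm (p - (xb, df xb))"
    using z \<open>\<epsilon> > 0\<close> unfolding regular_normal_def by blast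
  obtain \<delta>2 where "\<delta>2 > 0"
    and \<delta>2: "\<And>x. norm (x - xb) < \<delta>2 \<Longrightarrow> norm (dg x - dg xb - ddg (x - xb)) \<le> \<epsilon> * norm (x - xb)"
    using dg_deriv \<open>\<epsilon> > 0\<close> unfolding has_derivative_within_alt by blast
  obtain r where "r > 0" and r: "ball xb r \<subseteq> U \<inter> V"
    using open_Int[OF \<open>open U\<close> \<open>open V\<close>] \<open>xb \<in> U\<close> \<open>xb \<in> V\<close> by (meson IntI open_contains_ball)
  define \<rho> where "\<rho> = min r (min (\<delta>1 / (1 + L)) \<delta>2)"
  show ?thesis
  proof (intro exI[of _ \<rho>] conjI allI impI)
    show "\<rho> > 0" using \<open>r > 0\<close> \<open>\<delta>1 > 0\<close> \<open>\<delta>2 > 0\<close> \<open>L \<ge> 0\<close> by (simp add: \<rho>_def)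
    fix t :: real and d :: 'a assume "0 < t" and small: "norm (t *\<^sub>R d) < \<rho>"
    define h where "h = t *\<^sub>R d"
    define c where "c = - (z \<bullet> d) + yb \<bullet> ddg d d + \<epsilon> * (1 + L) * norm d
                      + L * norm (d + w) * norm d + norm yb * \<epsilon> * (norm d)\<^sup>2"
    define \<Phi> where "\<Phi> s = f (xb + s *\<^sub>R h) + yb \<bullet> g (xb + s *\<^sub>R h)" for s
    define \<Phi>' where "\<Phi>' s = df (xb + s *\<^sub>R h) \<bullet> h + yb \<bullet> dg (xb + s *\<^sub>R h) h" for s
    have near: "xb + s *\<^sub>R h \<in> U \<and> xb + s *\<^sub>R h \<in> V \<and> norm (s *\<^sub>R h) < \<rho>"
      if "0 \<le> s" "s \<le> 1" for s
    proof -
      have "norm (s *\<^sub>R h) < \<rho>"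
        using small that mult_left_le_one_le[of "norm h" s] by (simp add: h_def abs_mult mult.assoc)
      then show ?thesis using r by (auto simp: \<rho>_def dist_norm)
    qed
    have "\<Phi> 1 - \<Phi> 0 \<le> \<Phi>' 0 + t\<^sup>2 * c / 2"
    proof (rule increment_le_of_derivative_increment_le)
      fix s :: real assume s: "0 \<le> s" "s \<le> 1"
      show "(\<Phi> has_real_derivative \<Phi>' s) (at s)"
        unfolding \<Phi>_def \<Phi>'_def
        using near[OF s] f_deriv g_deriv by (intro has_real_derivative_lagrangian_segment) auto
      define u where "u = (s * t) *\<^sub>R d"
      have u: "s *\<^sub>R h = u" "xb + u \<in> U" "norm u < \<rho>" using near[OF s] by (auto simp: u_def h_def)
      have "(df (xb + u) - df xb) \<bullet> h \<le>
          s * (t\<^sup>2 * (- (z \<bullet> d) + \<epsilon> * (1 + L) * norm d + L * norm (d + w) * norm d))"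
        unfolding h_def
      proof (rule gradient_increment_inner_le[OF _ \<open>L \<ge> 0\<close> u(2) \<delta>1 _ \<open>\<epsilon> > 0\<close> u_def s(1) \<open>0 < t\<close>])
        show "norm (df (xb + u) - df xb) \<le> L * norm u"
          using Lip[OF u(2) \<open>xb \<in> U\<close>] by (simp add: dist_norm)
        show "(1 + L) * norm u < \<delta>1"
          using u(3) \<open>L \<ge> 0\<close> by (simp add: \<rho>_def pos_less_divide_eq mult.commute)
      qed
      moreover have "yb \<bullet> ((dg (xb + u) - dg xb) h) \<le>
          s * (t\<^sup>2 * (yb \<bullet> ddg d d + norm yb * \<epsilon> * (norm d)\<^sup>2))"
        unfolding h_def using \<delta>2[of "xb + u"] u(3)
        by (intro jacobian_increment_inner_le[OF _ u_def s(1) \<open>0 < t\<close>]) (simp add: \<rho>_def)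
      ultimately show "\<Phi>' s - \<Phi>' 0 \<le> s * (t\<^sup>2 * c)"
        by (simp add: \<Phi>'_def u(1) c_def inner_diff_left inner_diff_right blinfun.diff_left algebra_simps)
    qed
    moreover have "\<Phi>' 0 = 0" using KKT[of h] by (simp add: \<Phi>'_def)
    ultimately show "f (xb + t *\<^sub>R d) + yb \<bullet> g (xb + t *\<^sub>R d) - f xb - yb \<bullet> g xb \<le> t\<^sup>2 / 2 * c"
      by (simp add: \<Phi>_def h_def)
  qed
qed

lemma second_order_lower_bound_of_growth:
  fixes f :: "'a::euclidean_space \<Rightarrow> real" and df :: "'a \<Rightarrow> 'a"
    and g :: "'a \<Rightarrow> 'b::euclidean_space" and dg :: "'a \<Rightarrow> 'a \<Rightarrow>\<^sub>L 'b"
    and ddg :: "'a \<Rightarrow>\<^sub>L ('a \<Rightarrow>\<^sub>L 'b)"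
  assumes "open U" "xb \<in> U" and f_deriv: "\<forall>x\<in>U. (f has_derivative (\<lambda>h. df x \<bullet> h)) (at x)"
    and Lip: "\<And>x x'. x \<in> U \<Longrightarrow> x' \<in> U \<Longrightarrow> norm (df x - df x') \<le> L * dist x x'" and "L \<ge> 0"
    and "open V" "xb \<in> V" and g_deriv: "\<forall>x\<in>V. (g has_derivative blinfun_apply (dg x)) (at x)"
    and dg_deriv: "(dg has_derivative blinfun_apply ddg) (at xb)"
    and KKT: "\<And>h. df xb \<bullet> h + yb \<bullet> dg xb h = 0"
    and z: "(z, - w) \<in> regular_normal {(x, df x) | x. x \<in> U} (xb, df xb)"
    and T: "\<And>k. T k > 0" "T \<longlonglongrightarrow> 0" and ds: "ds \<longlonglongrightarrow> - w"
    and growth: "eventually (\<lambda>k. f (xb + T k *\<^sub>R ds k) + yb \<bullet> g (xb + T k *\<^sub>R ds k) - f xb - yb \<bullet> g xb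
                   \<ge> \<sigma> / 2 * (T k)\<^sup>2 * (norm (ds k))\<^sup>2) sequentially"
  shows "\<sigma> * (norm w)\<^sup>2 \<le> z \<bullet> w + yb \<bullet> ddg w w"
proof -
  define c where "c \<epsilon> d = - (z \<bullet> d) + yb \<bullet> ddg d d + \<epsilon> * (1 + L) * norm d
                      + L * norm (d + w) * norm d + norm yb * \<epsilon> * (norm d)\<^sup>2" for \<epsilon> d
  define K where "K = (1 + L) * norm w + norm yb * (norm w)\<^sup>2"
  have "K \<ge> 0" using \<open>L \<ge> 0\<close> by (simp add: K_def)
  have approx: "\<sigma> * (norm w)\<^sup>2 \<le> z \<bullet> w + yb \<bullet> ddg w w + \<epsilon> * K" if "\<epsilon> > 0" for \<epsilon>
  proof -
    obtain \<rho> where "\<rho> > 0" and \<rho>: "\<forall>t d. 0 < t \<longrightarrow> norm (t *\<^sub>R d) < \<rho> \<longrightarrow>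
        f (xb + t *\<^sub>R d) + yb \<bullet> g (xb + t *\<^sub>R d) - f xb - yb \<bullet> g xb \<le> t\<^sup>2 / 2 * c \<epsilon> d"
      using lagrangian_upper_estimate[OF assms(1-11) \<open>\<epsilon> > 0\<close>] unfolding c_def by blast
    have "(\<lambda>k. norm (T k *\<^sub>R ds k)) \<longlonglongrightarrow> norm (0 *\<^sub>R (- w))" by (intro tendsto_intros T ds)
    then have "eventually (\<lambda>k. norm (T k *\<^sub>R ds k) < \<rho>) sequentially"
      using \<open>\<rho> > 0\<close> by (auto dest: order_tendstoD(2))
    then have "eventually (\<lambda>k. \<sigma> * (norm (ds k))\<^sup>2 \<le> c \<epsilon> (ds k)) sequentially"
      using growth
    proof eventually_elim
      case (elim k)
      then have "\<sigma> / 2 * (T k)\<^sup>2 * (norm (ds k))\<^sup>2 \<le> (T k)\<^sup>2 / 2 * c \<epsilon> (ds k)"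
        using \<rho>[rule_format, OF T(1)[of k] elim(1)] elim(2) by linarith
      then show ?case using T(1)[of k] by (simp add: algebra_simps)
    qed
    moreover have "(\<lambda>k. c \<epsilon> (ds k)) \<longlonglongrightarrow> c \<epsilon> (- w)"
      unfolding c_def by (intro tendsto_intros ds)
    moreover have "(\<lambda>k. \<sigma> * (norm (ds k))\<^sup>2) \<longlonglongrightarrow> \<sigma> * (norm (- w))\<^sup>2"
      by (intro tendsto_intros ds)
    ultimately have "\<sigma> * (norm (- w))\<^sup>2 \<le> c \<epsilon> (- w)"
      by (intro tendsto_le[OF trivial_limit_sequentially])
    then show ?thesis
      by (simp add: c_def K_def blinfun.minus_left blinfun.minus_right algebra_simps)
  qed
  show ?thesis
  proof (rule field_le_epsilon)
    fix e :: real assume "e > 0"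
    then have "\<sigma> * (norm w)\<^sup>2 \<le> z \<bullet> w + yb \<bullet> ddg w w + e / (K + 1) * K"
      using \<open>K \<ge> 0\<close> by (intro approx) simp
    also have "e / (K + 1) * K \<le> e" using \<open>e > 0\<close> \<open>K \<ge> 0\<close> by (simp add: field_simps)
    finally show "\<sigma> * (norm w)\<^sup>2 \<le> z \<bullet> w + yb \<bullet> ddg w w + e" by simp
  qed
qed

lemma second_order_condition_of_growth:
  fixes f :: "'a::euclidean_space \<Rightarrow> real" and df :: "'a \<Rightarrow> 'a"
    and g :: "'a \<Rightarrow> 'b::euclidean_space" and dg :: "'a \<Rightarrow> 'a \<Rightarrow>\<^sub>L 'b"
    and ddg :: "'a \<Rightarrow> 'a \<Rightarrow>\<^sub>L ('a \<Rightarrow>\<^sub>L 'b)"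
  assumes "polyhedron \<Theta>" and feas: "g xb \<in> \<Theta>"
    and "open U" "xb \<in> U" and f_deriv: "\<forall>x\<in>U. (f has_derivative (\<lambda>h. df x \<bullet> h)) (at x)"
    and df_lip: "\<exists>L. \<forall>x\<in>U. \<forall>x'\<in>U. norm (df x - df x') \<le> L * dist x x'"
    and "open V" "xb \<in> V" and g_deriv: "\<forall>x\<in>V. (g has_derivative blinfun_apply (dg x)) (at x)"
    and dg_deriv: "\<forall>x\<in>V. (dg has_derivative blinfun_apply (ddg x)) (at x)"
    and yb: "yb \<in> limiting_normal \<Theta> (g xb)"
    and KKT: "df xb + adjoint (blinfun_apply (dg xb)) yb = 0"
    and SOCQ: "coderiv_normal \<Theta> (g xb) yb 0 \<inter> {y. adjoint (blinfun_apply (dg xb)) y = 0} = {0}"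
    and growth: "\<exists>\<delta>>0. \<forall>x. g x \<in> \<Theta> \<and> dist x xb < \<delta> \<longrightarrow> f x \<ge> f xb + \<sigma> / 2 * (norm (x - xb))\<^sup>2"
    and w: "- w \<in> critical_cone {x. g x \<in> \<Theta>} xb (- df xb)"
    and z: "z \<in> breve_subdiff2 U df xb w"
  shows "z \<bullet> w + yb \<bullet> (ddg xb w w) \<ge> \<sigma> * (norm w)\<^sup>2"
proof -
  define A where "A = blinfun_apply (dg xb)"
  have "linear A" unfolding A_def by (rule bounded_linear.linear[OF blinfun.bounded_linear_right])
  have gd: "(g has_derivative A) (at xb)" using g_deriv \<open>xb \<in> V\<close> by (simp add: A_def)
  have KKT': "df xb \<bullet> h + yb \<bullet> dg xb h = 0" for h
    using arg_cong[OF KKT, of "\<lambda>v. v \<bullet> h"] adjoint_clauses(2)[OF \<open>linear A\<close>, of yb h]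
    by (simp add: inner_add_left A_def)
  have "yb \<bullet> A (- w) = 0"
    using w KKT'[of "- w"] by (simp add: critical_cone_def A_def)
  obtain L0 where L0: "\<forall>x\<in>U. \<forall>x'\<in>U. norm (df x - df x') \<le> L0 * dist x x'" using df_lip by blast
  have Lip: "norm (df x - df x') \<le> max L0 0 * dist x x'" if "x \<in> U" "x' \<in> U" for x x'
    using L0 that mult_right_mono[of L0 "max L0 0" "dist x x'"] by fastforce
  obtain r where "r > 0" "ball xb r \<subseteq> V" using \<open>open V\<close> \<open>xb \<in> V\<close> open_contains_ball by blast
  then have "continuous_on (ball xb r) g"
    using g_deriv by (intro continuous_at_imp_continuous_on) (auto dest: has_derivative_continuous)
  then obtain T ds where T: "\<And>n. T n > 0" "T \<longlonglongrightarrow> 0" and ds: "ds \<longlonglongrightarrow> - w"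
    and feasible: "eventually (\<lambda>n. g (xb + T n *\<^sub>R ds n) \<in> \<Theta>) sequentially"
    and yb_const: "\<And>n. yb \<bullet> g (xb + T n *\<^sub>R ds n) = yb \<bullet> g xb"
    using critical_direction_feasible_sequence[OF \<open>polyhedron \<Theta>\<close> feas gd \<open>r > 0\<close> _
        span_limiting_normal_inter_ker_adjoint[OF polyhedron_imp_convex[OF \<open>polyhedron \<Theta>\<close>]
          \<open>linear A\<close> yb SOCQ[folded A_def]] yb \<open>yb \<bullet> A (- w) = 0\<close>] w
    by (auto simp: critical_cone_def)
  obtain \<delta> where "\<delta> > 0"
    and \<delta>: "\<forall>x. g x \<in> \<Theta> \<and> dist x xb < \<delta> \<longrightarrow> f x \<ge> f xb + \<sigma> / 2 * (norm (x - xb))\<^sup>2"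
    using growth by blast
  have "(\<lambda>n. dist (xb + T n *\<^sub>R ds n) xb) \<longlonglongrightarrow> dist (xb + 0 *\<^sub>R (- w)) xb"
    by (intro tendsto_intros T ds)
  then have "eventually (\<lambda>n. dist (xb + T n *\<^sub>R ds n) xb < \<delta>) sequentially"
    using \<open>\<delta> > 0\<close> by (auto dest: order_tendstoD(2))
  then have "eventually (\<lambda>n. f (xb + T n *\<^sub>R ds n) + yb \<bullet> g (xb + T n *\<^sub>R ds n) - f xb - yb \<bullet> g xb
                   \<ge> \<sigma> / 2 * (T n)\<^sup>2 * (norm (ds n))\<^sup>2) sequentially"
    using feasible
  proof eventually_elim
    case (elim n)
    then show ?case
      using \<delta> yb_const[of n] T(1)[of n] by (auto simp: power_mult_distrib)
  qed
  then show ?thesis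
    using second_order_lower_bound_of_growth[OF \<open>open U\<close> \<open>xb \<in> U\<close> f_deriv Lip _ \<open>open V\<close>
        \<open>xb \<in> V\<close> g_deriv _ KKT' _ T ds] dg_deriv \<open>xb \<in> V\<close> z
    by (simp add: breve_subdiff2_def)
qed

theorem corollary7p4:
  fixes f :: "'a::euclidean_space \<Rightarrow> real"
    and df :: "'a \<Rightarrow> 'a"
    and g :: "'a \<Rightarrow> 'b::euclidean_space"
    and dg :: "'a \<Rightarrow> 'a \<Rightarrow>\<^sub>L 'b"
    and ddg :: "'a \<Rightarrow> 'a \<Rightarrow>\<^sub>L ('a \<Rightarrow>\<^sub>L 'b)"
    and \<Theta> :: "'b set"
    and U V :: "'a set"
    and xb :: 'a and yb :: 'b
  assumes poly: "polyhedron \<Theta>" and nonempty: "\<Theta> \<noteq> {}"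
    and feas: "g xb \<in> \<Theta>"
    \<comment> \<open>f is C^{1,1} around xb, with gradient df\<close>
    and U: "open U" "xb \<in> U"
    and f_deriv: "\<forall>x\<in>U. (f has_derivative (\<lambda>h. df x \<bullet> h)) (at x)"
    and df_lip: "\<exists>L. \<forall>x\<in>U. \<forall>x'\<in>U. norm (df x - df x') \<le> L * dist x x'"
    \<comment> \<open>g is C^2 around xb, with derivative dg and second derivative ddg\<close>
    and V: "open V" "xb \<in> V"
    and g_deriv: "\<forall>x\<in>V. (g has_derivative blinfun_apply (dg x)) (at x)"
    and dg_deriv: "\<forall>x\<in>V. (dg has_derivative blinfun_apply (ddg x)) (at x)"
    and ddg_cont: "continuous_on V ddg"
    \<comment> \<open>SOCQ at xb with multiplier yb\<close>
    and yb_normal: "yb \<in> limiting_normal \<Theta> (g xb)"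
    and KKT: "df xb + adjoint (blinfun_apply (dg xb)) yb = 0"
    and SOCQ: "coderiv_normal \<Theta> (g xb) yb 0 \<inter> {y. adjoint (blinfun_apply (dg xb)) y = 0} = {0}"
  shows
    "((\<exists>\<delta>>0. \<forall>x. g x \<in> \<Theta> \<and> dist x xb < \<delta> \<longrightarrow> f xb \<le> f x) \<longrightarrow>
        (\<forall>y. y \<in> limiting_normal \<Theta> (g xb) \<and> df xb + adjoint (blinfun_apply (dg xb)) y = 0
              \<longrightarrow> y = yb) \<and>
        (\<forall>w z. - w \<in> critical_cone {x. g x \<in> \<Theta>} xb (- df xb) \<and> z \<in> breve_subdiff2 U df xb w
              \<longrightarrow> z \<bullet> w + yb \<bullet> (ddg xb w w) \<ge> 0))
     \<and>
     (\<forall>\<sigma>>0. (\<exists>\<delta>>0. \<forall>x. g x \<in> \<Theta> \<and> dist x xb < \<delta> \<longrightarrow>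
                 f x \<ge> f xb + \<sigma> / 2 * (norm (x - xb))\<^sup>2) \<longrightarrow>
        (\<forall>y. y \<in> limiting_normal \<Theta> (g xb) \<and> df xb + adjoint (blinfun_apply (dg xb)) y = 0
              \<longrightarrow> y = yb) \<and>
        (\<forall>w z. - w \<in> critical_cone {x. g x \<in> \<Theta>} xb (- df xb) \<and> z \<in> breve_subdiff2 U df xb w
              \<longrightarrow> z \<bullet> w + yb \<bullet> (ddg xb w w) \<ge> \<sigma> * (norm w)\<^sup>2))"
proof -
  have "convex \<Theta>" using poly by (rule polyhedron_imp_convex)
  have unique: "y = yb"
    if "y \<in> limiting_normal \<Theta> (g xb)" "df xb + adjoint (blinfun_apply (dg xb)) y = 0" for y
    by (rule multiplier_unique[OF \<open>convex \<Theta>\<close> _ yb_normal that(1) KKT that(2) SOCQ])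
      (rule bounded_linear.linear[OF blinfun.bounded_linear_right])
  note second_order = second_order_condition_of_growth[OF poly feas U f_deriv df_lip V g_deriv
      dg_deriv yb_normal KKT SOCQ]
  have "z \<bullet> w + yb \<bullet> (ddg xb w w) \<ge> 0"
    if "\<exists>\<delta>>0. \<forall>x. g x \<in> \<Theta> \<and> dist x xb < \<delta> \<longrightarrow> f xb \<le> f x"
      "- w \<in> critical_cone {x. g x \<in> \<Theta>} xb (- df xb)" "z \<in> breve_subdiff2 U df xb w" for w z
    using second_order[of 0 w z] that by simp
  then show ?thesis using unique second_order by blast
qed

end
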